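(* Let $W$ be a finite Coxeter group with simple reflections $S$ and let $J\subseteq S$. For $n\in N_J$ let $\sigma_J(n)$ be the sign of the permutation of $J$ given by $s\mapsto n^{-1}sn$. Then $\sigma_J(n)=\epsilon(n)\alpha_J(n)$ for all $n\in N_J$.
   Context: $W$ acts as a reflection group on $V=\mathbb R^{|S|}$, $\ell$ is its length function, $\epsilon(w)=\det(w|_V)$. $W_J=\langle J\rangle$, $X_J=\{w\in W:\ell(sw)>\ell(w)\ \forall s\in J\}$, and $N_J=\{x\in X_J: x^{-1}Jx=J\}$, a subgroup of $N_W(W_J)$. $\alpha_J(w)=\det(w|_{\operatorname{Fix}(W_J)})$ for $w\in N_W(W_J)$, where $\operatorname{Fix}(W_J)$ is the fixed point subspace of $W_J$ in $V$. *)

theory Defs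
  imports "HOL-Analysis.Analysis" "HOL-Combinatorics.Permutations"
begin

text \<open>
  The simple reflections S are indexed by a finite type 'n (so |S| = CARD('n)),
  V = real^'n, and the simple root of the index i is the unit vector a i.
  W is the group of linear maps of V generated by the reflections sref a i.
\<close>

definition sref :: "('n::finite \<Rightarrow> real^'n) \<Rightarrow> 'n \<Rightarrow> real^'n \<Rightarrow> real^'n" where
  "sref a i x = x - (2 * (x \<bullet> a i)) *\<^sub>R a i"

definition word_map :: "('n::finite \<Rightarrow> real^'n) \<Rightarrow> 'n list \<Rightarrow> real^'n \<Rightarrow> real^'n" where
  "word_map a ws = foldr (\<lambda>i f. sref a i \<circ> f) ws id"

definition coxW :: "('n::finite \<Rightarrow> real^'n) \<Rightarrow> (real^'n \<Rightarrow> real^'n) set" where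
  "coxW a = range (word_map a)"

definition parW :: "('n::finite \<Rightarrow> real^'n) \<Rightarrow> 'n set \<Rightarrow> (real^'n \<Rightarrow> real^'n) set" where
  "parW a J = {word_map a ws | ws. set ws \<subseteq> J}"

definition m_ord :: "('n::finite \<Rightarrow> real^'n) \<Rightarrow> 'n \<Rightarrow> 'n \<Rightarrow> nat" where
  "m_ord a i j = (LEAST k. 0 < k \<and> (sref a i \<circ> sref a j) ^^ k = id)"

text \<open>(W,S) is a finite Coxeter group realised in its geometric representation on
  V = R^|S|: the simple roots form a basis of unit vectors with
  <a_i, a_j> = - cos (pi / m_ij), and W is finite.\<close>
definition finite_coxeter_geom :: "('n::finite \<Rightarrow> real^'n) \<Rightarrow> bool" where
  "finite_coxeter_geom a \<longleftrightarrow>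
     inj a \<and> independent (range a) \<and> (\<forall>i. norm (a i) = 1) \<and>
     finite (coxW a) \<and>
     (\<forall>i j. i \<noteq> j \<longrightarrow> a i \<bullet> a j = - cos (pi / real (m_ord a i j)))"

definition coxlen :: "('n::finite \<Rightarrow> real^'n) \<Rightarrow> (real^'n \<Rightarrow> real^'n) \<Rightarrow> nat" where
  "coxlen a w = (LEAST k. \<exists>ws. length ws = k \<and> word_map a ws = w)"

definition eps :: "(real^'n::finite \<Rightarrow> real^'n) \<Rightarrow> real" where
  "eps w = det (matrix w)"

definition X_J :: "('n::finite \<Rightarrow> real^'n) \<Rightarrow> 'n set \<Rightarrow> (real^'n \<Rightarrow> real^'n) set" where
  "X_J a J = {w \<in> coxW a. \<forall>s\<in>J. coxlen a (sref a s \<circ> w) > coxlen a w}"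

definition N_J :: "('n::finite \<Rightarrow> real^'n) \<Rightarrow> 'n set \<Rightarrow> (real^'n \<Rightarrow> real^'n) set" where
  "N_J a J = {x \<in> X_J a J. (\<lambda>s. inv x \<circ> s \<circ> x) ` (sref a ` J) = sref a ` J}"

definition FixW :: "('n::finite \<Rightarrow> real^'n) \<Rightarrow> 'n set \<Rightarrow> (real^'n) set" where
  "FixW a J = {v. \<forall>w\<in>parW a J. w v = v}"

text \<open>Determinant of a linear map f restricted to a subspace U that f maps into itself:
  Leibniz formula for the matrix of f in a basis B of U
  (entry (b,c) = coefficient of b in f c).\<close>
definition det_on :: "(real^'n::finite) set \<Rightarrow> (real^'n \<Rightarrow> real^'n) \<Rightarrow> real" where
  "det_on U f = (let B = (SOME B. independent B \<and> B \<subseteq> U \<and> span B = U) in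
     (\<Sum>p | p permutes B. of_int (sign p) * (\<Prod>b\<in>B. representation B (f (p b)) b)))"

definition alpha_J :: "('n::finite \<Rightarrow> real^'n) \<Rightarrow> 'n set \<Rightarrow> (real^'n \<Rightarrow> real^'n) \<Rightarrow> real" where
  "alpha_J a J w = det_on (FixW a J) w"

definition sigma_J :: "('n::finite \<Rightarrow> real^'n) \<Rightarrow> 'n set \<Rightarrow> (real^'n \<Rightarrow> real^'n) \<Rightarrow> int" where
  "sigma_J a J n = sign_on J (\<lambda>i. THE j. j \<in> J \<and> inv n \<circ> sref a i \<circ> n = sref a j)"

end

theory Submission
  imports Defs
begin

text \<open>
  For s \<in> J the conjugate n^-1 s n is the reflection in the unit vector n^-1(\<alpha>_s), so
  n^-1(\<alpha>_s) = \<plusminus>\<alpha>_j where s_j = n^-1 s n. Because l(s n) > l(n), the root n^-1(\<alpha>_s) is a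
  nonnegative combination of simple roots, so the sign is +. Hence n permutes the roots
  {\<alpha>_s | s \<in> J} (according to the inverse of the permutation defining \<sigma>_J(n)) and preserves
  their orthogonal complement Fix(W_J). Computing det n in a basis adapted to
  V = Fix(W_J) \<oplus> span {\<alpha>_s | s \<in> J} gives \<epsilon>(n) = \<sigma>_J(n) \<alpha>_J(n), and since \<epsilon>(n) and \<sigma>_J(n)
  are signs this is the claim.

  The positivity of w(\<alpha>_s) when l(w s) > l(w) is the classical argument (Humphreys, Reflection
  Groups and Coxeter Groups, 5.4): by induction on l(w) it reduces to the dihedral subgroups
  <s, t>, where alternating words act on \<alpha>_s, \<alpha>_t by the coefficients sin(k\<pi>/m)/sin(\<pi>/m).
\<close>

definition basis_det :: "(real^'n::finite) set \<Rightarrow> (real^'n \<Rightarrow> real^'n) \<Rightarrow> real" where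
  "basis_det B f = (\<Sum>p | p permutes B. of_int (sign p) * (\<Prod>b\<in>B. representation B (f (p b)) b))"

lemma det_on_eq_basis_det:
  "det_on U f = basis_det (SOME B. independent B \<and> B \<subseteq> U \<and> span B = U) f"
  by (simp add: det_on_def basis_det_def Let_def)

lemma basis_det_cong:
  assumes "\<And>x. x \<in> span B \<Longrightarrow> f x = g x"
  shows "basis_det B f = basis_det B g"
  unfolding basis_det_def
proof (intro sum.cong refl arg_cong2[where f = "(*)"] prod.cong)
  fix p b assume "p \<in> {p. p permutes B}" "b \<in> B"
  then have "p b \<in> span B" by (simp add: permutes_in_image span_base)
  then show "representation B (f (p b)) b = representation B (g (p b)) b" by (simp add: assms)
qed

lemma det_eq_sum_permutes_bij:
  fixes R :: "'a \<Rightarrow> 'a \<Rightarrow> real" and g :: "'n::finite \<Rightarrow> 'a"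
  assumes g: "bij_betw g UNIV B"
  shows "det (\<chi> i j. R (g j) (g i) :: real^'n^'n)
    = (\<Sum>p | p permutes B. of_int (sign p) * (\<Prod>b\<in>B. R (p b) b))"
  unfolding det_def
proof (rule sum.reindex_bij_witness[where i = "map_permutation B (inv_into UNIV g)"
      and j = "map_permutation UNIV g"])
  have inj: "inj g" using g by (simp add: bij_betw_def)
  fix q assume q: "q \<in> {q. q permutes (UNIV::'n set)}"
  show "map_permutation B (inv_into UNIV g) (map_permutation UNIV g q) = q"
    by (rule map_permutation_compose_inv) (use g q in \<open>auto simp: bij_betw_inv_into_left\<close>)
  show "map_permutation UNIV g q \<in> {p. p permutes B}"
    using map_permutation_permutes[OF g] q by auto
  have "(\<Prod>b\<in>B. R (map_permutation UNIV g q b) b)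
      = (\<Prod>i\<in>UNIV. R (map_permutation UNIV g q (g i)) (g i))"
    using g by (simp add: prod.reindex_bij_betw[symmetric])
  also have "\<dots> = (\<Prod>i\<in>UNIV. (\<chi> i j. R (g j) (g i) :: real^'n^'n) $ i $ q i)"
    using inj by (simp add: map_permutation_apply)
  finally show "of_int (sign (map_permutation UNIV g q)) * (\<Prod>b\<in>B. R (map_permutation UNIV g q b) b)
      = of_int (sign q) * (\<Prod>i\<in>UNIV. (\<chi> i j. R (g j) (g i) :: real^'n^'n) $ i $ q i)"
    using sign_map_permutation[of g UNIV q] inj q by simp
next
  fix p assume p: "p \<in> {p. p permutes B}"
  have gi: "bij_betw (inv_into UNIV g) B UNIV" using g by (rule bij_betw_inv_into)
  show "map_permutation UNIV g (map_permutation B (inv_into UNIV g) p) = p"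
    by (rule map_permutation_compose_inv) (use g gi p in \<open>auto simp: bij_betw_inv_into_right\<close>)
  show "map_permutation B (inv_into UNIV g) p \<in> {q. q permutes (UNIV::'n set)}"
    using map_permutation_permutes[OF gi] p by auto
qed

lemma sum_representation_component:
  fixes B :: "(real^'n::finite) set"
  assumes "independent B" "span B = UNIV" "bij_betw g UNIV B"
  shows "(\<Sum>k\<in>UNIV. representation B x (g k) * g k $ i) = x $ i"
proof -
  have "x = (\<Sum>b\<in>B. representation B x b *\<^sub>R b)"
    using assms independent_imp_finite by (intro sum_representation_eq[symmetric]) auto
  also have "\<dots> = (\<Sum>k\<in>UNIV. representation B x (g k) *\<^sub>R g k)"
    using assms(3) by (simp add: sum.reindex_bij_betw[symmetric])
  finally have "x $ i = (\<Sum>k\<in>UNIV. representation B x (g k) *\<^sub>R g k) $ i" by simp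
  then show ?thesis by (simp add: sum_component)
qed

lemma det_matrix_eq_basis_det:
  fixes B :: "(real^'n::finite) set"
  assumes indB: "independent B" and spB: "span B = UNIV" and lf: "linear f"
  shows "det (matrix f) = basis_det B f"
proof -
  have fin: "finite B" using indB by (rule independent_imp_finite)
  have "card B = dim (UNIV :: (real^'n) set)"
    using indB spB by (intro basis_card_eq_dim) auto
  then obtain g :: "'n \<Rightarrow> real^'n" where g: "bij_betw g UNIV B"
    using finite_same_card_bij[OF finite fin] by auto
  note coord = sum_representation_component[OF indB spB g]
  define P :: "real^'n^'n" where "P = (\<chi> i j. g j $ i)"
  define Q :: "real^'n^'n" where "Q = (\<chi> i j. representation B (axis j 1) (g i))"
  define M :: "real^'n^'n" where "M = (\<chi> i j. representation B (f (g j)) (g i))"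
  have "P ** Q = mat 1"
  proof -
    have "(P ** Q) $ i $ j = (\<Sum>k\<in>UNIV. representation B (axis j 1) (g k) * g k $ i)" for i j
      by (simp add: matrix_matrix_mult_def P_def Q_def mult.commute)
    then show ?thesis by (simp add: vec_eq_iff coord mat_def axis_def)
  qed
  then have "det P \<noteq> 0" by (metis det_I det_mul mult_zero_left zero_neq_one)
  moreover have "matrix f ** P = P ** M"
  proof -
    have "(matrix f ** P) $ i $ j = (P ** M) $ i $ j" for i j
    proof -
      have "(matrix f ** P) $ i $ j = (matrix f *v g j) $ i"
        by (simp add: matrix_matrix_mult_def matrix_vector_mult_def P_def)
      also have "\<dots> = (\<Sum>k\<in>UNIV. representation B (f (g j)) (g k) * g k $ i)"
        using lf by (simp add: matrix_works coord)
      also have "\<dots> = (P ** M) $ i $ j"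
        by (simp add: matrix_matrix_mult_def P_def M_def mult.commute)
      finally show ?thesis .
    qed
    then show ?thesis by (simp add: vec_eq_iff)
  qed
  ultimately have "det (matrix f) = det M" by (metis det_mul mult.commute mult_left_cancel)
  also have "\<dots> = basis_det B f"
    unfolding M_def basis_det_def by (rule det_eq_sum_permutes_bij[OF g])
  finally show ?thesis .
qed

lemma representation_scaleR_basis_vector:
  assumes "independent B" "c \<in> B"
  shows "representation B (r *\<^sub>R c) b = (if b = c then r else 0)"
  using representation_scale[OF assms(1) span_base[OF assms(2)]] representation_basis[OF assms]
  by simp

lemma permutes_comp_inv_permutes:
  assumes disj: "A \<inter> C = {}" and q: "q permutes C" and p: "p permutes A \<union> C"
    and pq: "\<And>c. c \<in> C \<Longrightarrow> p c = q c"
  shows "p \<circ> inv q permutes A"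
proof -
  have "p \<circ> inv q permutes A \<union> C"
    using p q by (intro permutes_compose permutes_inv permutes_subset[OF q]) auto
  moreover have "(p \<circ> inv q) x = x" if "x \<notin> A" for x
  proof (cases "x \<in> C")
    case True
    then have "inv q x \<in> C" using q by (simp add: permutes_in_image permutes_inv)
    then show ?thesis using pq q by (simp add: permutes_inverses(1))
  next
    case False
    then have "inv q x = x" using q by (simp add: permutes_inv_eq permutes_not_in)
    then show ?thesis using False that p by (simp add: permutes_not_in)
  qed
  ultimately show ?thesis by (auto simp: permutes_def)
qed

context
  fixes BU C :: "(real^'n::finite) set" and f q :: "real^'n \<Rightarrow> real^'n" and \<mu> :: "real^'n \<Rightarrow> real"
  assumes indep: "independent (BU \<union> C)" and disj: "BU \<inter> C = {}"
    and f_span: "\<And>x. x \<in> span BU \<Longrightarrow> f x \<in> span BU"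
    and q: "q permutes C" and f_q: "\<And>c. c \<in> C \<Longrightarrow> f (q c) = \<mu> c *\<^sub>R c"
begin

lemma representation_block_span:
  "x \<in> span BU \<Longrightarrow> representation (BU \<union> C) x = representation BU x"
  using representation_extend[OF indep] by auto

lemma permutation_agrees_on_block_if_nonzero:
  assumes p: "p permutes BU \<union> C"
    and nz: "\<And>b. b \<in> BU \<union> C \<Longrightarrow> representation (BU \<union> C) (f (p b)) b \<noteq> 0"
    and c: "c \<in> C"
  shows "p c = q c"
proof (cases "p c \<in> BU")
  case True
  then have "f (p c) \<in> span BU" by (intro f_span span_base)
  then have "representation (BU \<union> C) (f (p c)) c = representation BU (f (p c)) c"
    by (simp add: representation_block_span)
  also have "\<dots> = 0" using representation_ne_zero[of BU "f (p c)" c] c disj by blast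
  finally show ?thesis using nz c by auto
next
  case False
  then have "p c \<in> C" using permutes_in_image[OF p, of c] c by blast
  then obtain d where d: "d \<in> C" "q d = p c"
    using q by (metis permutes_inverses(1) permutes_in_image permutes_inv)
  have "representation (BU \<union> C) (f (p c)) c = (if c = d then \<mu> d else 0)"
    using f_q[OF d(1)] d representation_scaleR_basis_vector[OF indep] by auto
  then show ?thesis using nz[of c] c d by (auto split: if_splits)
qed

lemma basis_det_block_term:
  assumes p: "p permutes BU"
  shows "(\<Prod>b\<in>BU \<union> C. representation (BU \<union> C) (f ((p \<circ> q) b)) b)
    = (\<Prod>c\<in>C. \<mu> c) * (\<Prod>b\<in>BU. representation BU (f (p b)) b)"
proof -
  have fin: "finite BU" "finite C" using independent_imp_finite[OF indep] by auto
  have "(\<Prod>b\<in>C. representation (BU \<union> C) (f ((p \<circ> q) b)) b) = (\<Prod>c\<in>C. \<mu> c)"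
  proof (rule prod.cong[OF refl])
    fix c assume c: "c \<in> C"
    have "q c \<notin> BU" using c q disj by (auto simp: permutes_in_image)
    then have "p (q c) = q c" using p by (simp add: permutes_not_in)
    then show "representation (BU \<union> C) (f ((p \<circ> q) c)) c = \<mu> c"
      using f_q[OF c] representation_scaleR_basis_vector[OF indep] c by simp
  qed
  moreover have "(\<Prod>b\<in>BU. representation (BU \<union> C) (f ((p \<circ> q) b)) b)
      = (\<Prod>b\<in>BU. representation BU (f (p b)) b)"
  proof (rule prod.cong[OF refl])
    fix b assume b: "b \<in> BU"
    then have "q b = b" using disj permutes_not_in[OF q] by blast
    moreover have "f (p b) \<in> span BU" using p b f_span by (simp add: permutes_in_image span_base)
    ultimately show "representation (BU \<union> C) (f ((p \<circ> q) b)) b = representation BU (f (p b)) b"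
      using representation_block_span by simp
  qed
  ultimately show ?thesis by (simp add: prod.union_disjoint[OF fin disj] mult.commute)
qed

lemma det_matrix_block:
  assumes spans: "span (BU \<union> C) = UNIV" and lf: "linear f"
  shows "det (matrix f) = of_int (sign q) * (\<Prod>c\<in>C. \<mu> c) * basis_det BU f"
proof -
  define B where "B = BU \<union> C"
  define T where "T p = of_int (sign p) * (\<Prod>b\<in>B. representation B (f (p b)) b)" for p
  have fin: "finite B" "finite BU" "finite C"
    using independent_imp_finite[OF indep] B_def by auto
  let ?Q = "(\<lambda>p. p \<circ> q) ` {p. p permutes BU}"
  \<comment> \<open>a permutation of BU \<union> C contributes only if it agrees with q on C\<close>
  have vanish: "T p = 0" if p: "p permutes B" and "p \<notin> ?Q" for p
  proof (rule ccontr)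
    assume "T p \<noteq> 0"
    then have "representation B (f (p b)) b \<noteq> 0" if "b \<in> B" for b
      using that fin by (auto simp: T_def)
    then have "p \<circ> inv q permutes BU"
      using permutation_agrees_on_block_if_nonzero p disj q
      by (intro permutes_comp_inv_permutes) (auto simp: B_def)
    moreover have "p = (p \<circ> inv q) \<circ> q" using permutes_inv_o(2)[OF q] by (simp add: comp_assoc)
    ultimately show False using \<open>p \<notin> ?Q\<close> by blast
  qed
  have inj: "inj_on (\<lambda>p. p \<circ> q) {p. p permutes BU}"
    by (rule inj_onI) (metis comp_assoc comp_id permutes_inv_o(1)[OF q])
  have "?Q \<subseteq> {p. p permutes B}"
    using q permutes_subset[of _ BU B] permutes_subset[of q C B] B_def by (auto intro: permutes_compose)
  then have "det (matrix f) = (\<Sum>p\<in>?Q. T p)"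
    using det_matrix_eq_basis_det[OF indep spans lf] vanish fin
    by (auto simp: basis_det_def T_def B_def finite_permutations intro: sum.mono_neutral_right)
  also have "\<dots> = (\<Sum>p | p permutes BU. T (p \<circ> q))"
    using inj by (simp add: sum.reindex)
  also have "\<dots> = (\<Sum>p | p permutes BU. of_int (sign q) * (\<Prod>c\<in>C. \<mu> c) *
        (of_int (sign p) * (\<Prod>b\<in>BU. representation BU (f (p b)) b)))"
  proof (rule sum.cong[OF refl])
    fix p assume "p \<in> {p. p permutes BU}"
    then have p: "p permutes BU" by simp
    have "sign (p \<circ> q) = sign p * sign q"
      using p q fin by (intro sign_compose) (auto intro: permutes_imp_permutation)
    then show "T (p \<circ> q) = of_int (sign q) * (\<Prod>c\<in>C. \<mu> c) *
        (of_int (sign p) * (\<Prod>b\<in>BU. representation BU (f (p b)) b))"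
      using basis_det_block_term[OF p] by (simp add: T_def B_def)
  qed
  finally show ?thesis by (simp only: basis_det_def sum_distrib_left)
qed

end

lemma independent_Un_of_span_Int_zero:
  fixes A C :: "'a::real_vector set"
  assumes "finite C" "independent A" "independent C"
    and "\<And>x. x \<in> span A \<Longrightarrow> x \<in> span C \<Longrightarrow> x = 0"
  shows "independent (A \<union> C)"
  using assms(1,3,4)
proof (induction C rule: finite_induct)
  case empty then show ?case using assms(2) by simp
next
  case (insert c C)
  have "independent C" using insert.prems(1) by (meson dependent_mono subset_insertI)
  then have "independent (A \<union> C)"
    using insert.IH insert.prems(2) span_mono[of C "insert c C"] by blast
  moreover have "c \<notin> span (A \<union> C)"
  proof
    assume "c \<in> span (A \<union> C)"
    then obtain x y where xy: "x \<in> span A" "y \<in> span C" "c = x + y"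
      by (auto simp: span_Un)
    have "c - y \<in> span (insert c C)"
      using xy(2) span_mono[of C "insert c C"] by (blast intro: span_diff span_base)
    then have "x = 0" using insert.prems(2) xy by (metis add_diff_cancel_right')
    then have "c \<in> span C" using xy by simp
    then show False using insert.prems(1) insert.hyps(2) by (simp add: independent_insert)
  qed
  ultimately show ?case by (simp add: independent_insertI)
qed

lemma basis_Un_orthogonal_complement:
  fixes C BU :: "'a::euclidean_space set"
  assumes fin: "finite C" and indC: "independent C" and indBU: "independent BU"
    and spanBU: "span BU = {v. \<forall>c\<in>C. v \<bullet> c = 0}"
  shows "BU \<inter> C = {}" "independent (BU \<union> C)" "span (BU \<union> C) = UNIV"
proof -
  have orth: "x = 0" if "x \<in> span BU" "x \<in> span C" for x
  proof -
    have "orthogonal x x"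
      using that spanBU by (intro orthogonal_to_span[of x C x]) (auto simp: orthogonal_def)
    then show ?thesis by (simp add: orthogonal_def)
  qed
  show "independent (BU \<union> C)"
    using fin indBU indC orth by (rule independent_Un_of_span_Int_zero)
  show "BU \<inter> C = {}"
    using orth indBU indC span_base dependent_zero by blast
  show "span (BU \<union> C) = UNIV"
  proof (intro set_eqI iffI)
    fix x :: 'a
    obtain y z where yz: "y \<in> span C" "\<And>w. w \<in> span C \<Longrightarrow> orthogonal z w" "x = y + z"
      using orthogonal_subspace_decomp_exists[of C x] by blast
    have "z \<in> span BU" using yz(2) span_base[of _ C] by (auto simp: spanBU orthogonal_def)
    then have "x = z + y \<and> z \<in> span BU \<and> y \<in> span C" using yz(1,3) by simp
    then show "x \<in> span (BU \<union> C)" unfolding span_Un by blast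
  qed auto
qed

lemma some_basis_of_subspace:
  fixes U :: "(real^'n::finite) set"
  assumes "subspace U"
  defines "B \<equiv> SOME B. independent B \<and> B \<subseteq> U \<and> span B = U"
  shows "independent B" "span B = U"
proof -
  have "\<exists>B. independent B \<and> B \<subseteq> U \<and> span B = U"
    using basis_subspace_exists[OF assms(1)] by metis
  then have "independent B \<and> B \<subseteq> U \<and> span B = U"
    unfolding B_def by (rule someI_ex)
  then show "independent B" "span B = U" by auto
qed

lemma det_on_cong:
  assumes "subspace U" "\<And>x. x \<in> U \<Longrightarrow> f x = g x"
  shows "det_on U f = det_on U g"
  unfolding det_on_eq_basis_det
  using some_basis_of_subspace[OF assms(1)] assms(2) by (intro basis_det_cong) auto

lemma subspace_orthogonal_complement: "subspace {v. \<forall>c\<in>C. v \<bullet> c = 0}"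
  using subspace_orthogonal_to_vectors[of C] by (simp add: orthogonal_def inner_commute)

lemma det_matrix_eq_sign_det_on_orthogonal_complement:
  fixes C :: "(real^'n::finite) set"
  defines "U \<equiv> {v. \<forall>c\<in>C. v \<bullet> c = 0}"
  assumes lf: "linear f" and indC: "independent C" and f_U: "\<And>x. x \<in> U \<Longrightarrow> f x \<in> U"
    and q: "q permutes C" and f_q: "\<And>c. c \<in> C \<Longrightarrow> f (q c) = \<mu> c *\<^sub>R c"
  shows "det (matrix f) = of_int (sign q) * (\<Prod>c\<in>C. \<mu> c) * det_on U f"
proof -
  define BU where "BU = (SOME B. independent B \<and> B \<subseteq> U \<and> span B = U)"
  have BU: "independent BU" "span BU = U"
    using some_basis_of_subspace subspace_orthogonal_complement unfolding BU_def U_def by blast+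
  note basis = basis_Un_orthogonal_complement[OF independent_imp_finite[OF indC] indC BU(1)]
  have f_span: "f x \<in> span BU" if "x \<in> span BU" for x
    using f_U that BU(2) by simp
  show ?thesis
    unfolding det_on_eq_basis_det BU_def[symmetric]
    by (rule det_matrix_block[OF basis(2) basis(1) f_span q f_q basis(3) lf])
       (simp_all add: BU(2) U_def)
qed

definition reflection_along :: "real^'n::finite \<Rightarrow> real^'n \<Rightarrow> real^'n" where
  "reflection_along b x = x - (2 * (x \<bullet> b)) *\<^sub>R b"

lemma sref_eq_reflection_along: "sref a i = reflection_along (a i)"
  by (simp add: fun_eq_iff sref_def reflection_along_def)

lemma orthogonal_transformation_reflection_along:
  assumes "orthogonal_transformation w"
  shows "w (reflection_along b x) = reflection_along (w b) (w x)"
proof -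
  have "linear w" "w x \<bullet> w b = x \<bullet> b"
    using assms by (auto simp: orthogonal_transformation_def)
  then show ?thesis by (simp add: reflection_along_def linear_diff linear_scale)
qed

lemma reflection_along_uminus [simp]: "reflection_along (- b) = reflection_along b"
  by (simp add: fun_eq_iff reflection_along_def)

lemma orthogonal_transformation_comp_sref:
  assumes "orthogonal_transformation w"
  shows "w \<circ> sref a s = reflection_along (w (a s)) \<circ> w"
  using orthogonal_transformation_reflection_along[OF assms]
  by (simp add: fun_eq_iff sref_eq_reflection_along)

lemma word_map_Nil [simp]: "word_map a [] = id"
  by (simp add: word_map_def)

lemma word_map_Cons [simp]: "word_map a (i # ws) = sref a i \<circ> word_map a ws"
  by (simp add: word_map_def)

lemma word_map_append: "word_map a (xs @ ys) = word_map a xs \<circ> word_map a ys"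
  by (induction xs) auto

lemma coxlen_word_map_le: "coxlen a (word_map a ws) \<le> length ws"
  unfolding coxlen_def by (rule Least_le) auto

lemma coxlen_word_map_witness:
  obtains vs where "length vs = coxlen a (word_map a ws)" "word_map a vs = word_map a ws"
proof -
  have "\<exists>vs. length vs = coxlen a (word_map a ws) \<and> word_map a vs = word_map a ws"
    unfolding coxlen_def by (rule LeastI_ex) auto
  then show ?thesis using that by blast
qed

lemma coxlen_comp_le:
  "coxlen a (word_map a xs \<circ> word_map a ys) \<le> coxlen a (word_map a xs) + coxlen a (word_map a ys)"
proof -
  obtain xs' where "length xs' = coxlen a (word_map a xs)" "word_map a xs' = word_map a xs"
    by (rule coxlen_word_map_witness)
  moreover obtain ys' where "length ys' = coxlen a (word_map a ys)" "word_map a ys' = word_map a ys"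
    by (rule coxlen_word_map_witness)
  ultimately show ?thesis
    using coxlen_word_map_le[of a "xs' @ ys'"] by (simp add: word_map_append)
qed

lemma coxlen_append_le:
  "coxlen a (word_map a (xs @ ys)) \<le> coxlen a (word_map a xs) + length ys"
  using coxlen_comp_le[of a xs ys] coxlen_word_map_le[of a ys] by (simp add: word_map_append)

lemma coxlen_eq_0_imp_id: "coxlen a (word_map a ws) = 0 \<Longrightarrow> word_map a ws = id"
  by (metis coxlen_word_map_witness length_0_conv word_map_Nil)

definition reduced_word :: "('n::finite \<Rightarrow> real^'n) \<Rightarrow> 'n list \<Rightarrow> bool" where
  "reduced_word a ws \<longleftrightarrow> coxlen a (word_map a ws) = length ws"

lemma reduced_word_appendD: "reduced_word a (xs @ ys) \<Longrightarrow> reduced_word a ys"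
  using coxlen_comp_le[of a xs ys] coxlen_word_map_le[of a xs] coxlen_word_map_le[of a ys]
  by (simp add: reduced_word_def word_map_append)

fun alt_word :: "'n \<Rightarrow> 'n \<Rightarrow> nat \<Rightarrow> 'n list" where
  "alt_word s t 0 = []"
| "alt_word s t (Suc k) = (if even k then t else s) # alt_word s t k"

lemma length_alt_word [simp]: "length (alt_word s t k) = k"
  by (induction k) auto

lemma alt_word_suffix:
  assumes "k \<le> k'"
  obtains pre where "alt_word s t k' = pre @ alt_word s t k"
proof -
  have "\<exists>pre. alt_word s t k' = pre @ alt_word s t k"
    using assms
  proof (induction k')
    case (Suc k')
    then show ?case
      by (cases "k = Suc k'") (auto intro: exI[of _ "(if even k' then t else s) # _"])
  qed simp
  then show ?thesis using that by blast
qed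

lemma reduced_word_if_coxlen_additive:
  assumes "word_map a ws = word_map a v \<circ> word_map a us"
    and "coxlen a (word_map a v) + length us \<le> coxlen a (word_map a ws)"
  shows "reduced_word a us"
  using assms coxlen_comp_le[of a v us] coxlen_word_map_le[of a us]
  by (simp add: reduced_word_def)

lemma coxlen_last_letter:
  assumes "coxlen a (word_map a ws) \<noteq> 0"
  obtains v t where "word_map a ws = word_map a (v @ [t])"
    "coxlen a (word_map a v) + 1 = coxlen a (word_map a ws)"
proof -
  obtain xs where xs: "length xs = coxlen a (word_map a ws)" "word_map a xs = word_map a ws"
    by (rule coxlen_word_map_witness)
  then obtain v t where v: "xs = v @ [t]"
    using assms by (metis length_0_conv rev_exhaust)
  have "word_map a ws = word_map a (v @ [t])" using xs v by simp
  moreover have "coxlen a (word_map a v) + 1 = coxlen a (word_map a ws)"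
    using coxlen_word_map_le[of a v] coxlen_append_le[of a v "[t]"] xs v by simp
  ultimately show ?thesis by (rule that)
qed

locale unit_roots =
  fixes a :: "'n::finite \<Rightarrow> real^'n"
  assumes norm_root: "norm (a i) = 1"
begin

lemma inner_root_self [simp]: "a i \<bullet> a i = 1"
  using norm_root[of i] by (simp add: norm_eq_1)

lemma root_nonzero: "a i \<noteq> 0"
  using norm_root[of i] by auto

lemma sref_sref [simp]: "sref a i (sref a i x) = x"
  by (simp add: sref_def inner_diff_left algebra_simps)

lemma sref_comp_sref [simp]: "sref a i \<circ> sref a i = id"
  by (simp add: fun_eq_iff)

lemma sref_comp_sref_comp [simp]: "sref a i \<circ> (sref a i \<circ> f) = f"
  by (simp add: fun_eq_iff)

lemma sref_eq_self_iff: "sref a i v = v \<longleftrightarrow> v \<bullet> a i = 0"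
  using root_nonzero[of i] by (auto simp: sref_def)

lemma linear_sref: "linear (sref a i)"
  by (rule linearI) (auto simp: sref_def inner_add_left algebra_simps scaleR_add_left)

lemma orthogonal_transformation_sref: "orthogonal_transformation (sref a i)"
proof -
  have "sref a i x \<bullet> sref a i y = x \<bullet> y" for x y
    by (simp add: sref_def inner_diff_left inner_diff_right algebra_simps inner_commute)
  then show ?thesis
    unfolding orthogonal_transformation by (simp add: linear_sref norm_eq_sqrt_inner)
qed

lemma orthogonal_transformation_word_map: "orthogonal_transformation (word_map a ws)"
  by (induction ws) (auto simp: orthogonal_transformation_sref orthogonal_transformation_compose
      simp del: o_apply)

lemma linear_word_map: "linear (word_map a ws)"
  using orthogonal_transformation_word_map orthogonal_transformation by blast

lemma word_map_rev_comp: "word_map a (rev ws) \<circ> word_map a ws = id"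
  by (induction ws) (auto simp: word_map_append comp_assoc)

lemma word_map_comp_rev: "word_map a ws \<circ> word_map a (rev ws) = id"
  using word_map_rev_comp[of "rev ws"] by simp

lemma inv_word_map: "inv (word_map a ws) = word_map a (rev ws)"
  using word_map_rev_comp word_map_comp_rev by (metis inv_unique_comp)

lemma coxlen_rev: "coxlen a (word_map a (rev ws)) = coxlen a (word_map a ws)"
proof -
  have le: "coxlen a (word_map a (rev xs)) \<le> coxlen a (word_map a xs)" for xs
  proof -
    obtain ys where "length ys = coxlen a (word_map a xs)" "word_map a ys = word_map a xs"
      by (rule coxlen_word_map_witness)
    moreover from this(2) have "word_map a (rev ys) = word_map a (rev xs)"
      by (metis inv_word_map)
    ultimately show ?thesis using coxlen_word_map_le[of a "rev ys"] by simp
  qed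
  show ?thesis using le[of ws] le[of "rev ws"] by simp
qed

lemma det_sref: "det (matrix (sref a i)) = -1"
proof -
  let ?U = "{v. \<forall>c\<in>{a i}. v \<bullet> c = 0}"
  have indep: "independent {a i}" using root_nonzero by simp
  have fixes_U: "sref a i x = x" if "x \<in> ?U" for x
    using that by (simp add: sref_eq_self_iff)
  have "sref a i (a i) = -1 *\<^sub>R a i"
    by (simp add: sref_def scaleR_2 algebra_simps)
  then have "det (matrix (sref a i)) = - det_on ?U (sref a i)"
    using det_matrix_eq_sign_det_on_orthogonal_complement[where f = "sref a i" and C = "{a i}"
        and q = id and \<mu> = "\<lambda>_. -1"] linear_sref indep fixes_U
    by simp
  moreover have "det_on ?U id = 1"
    using det_matrix_eq_sign_det_on_orthogonal_complement[where f = id and C = "{a i}"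
        and q = id and \<mu> = "\<lambda>_. 1"] indep linear_id
    by (simp add: matrix_id)
  moreover have "det_on ?U (sref a i) = det_on ?U id"
    using fixes_U by (intro det_on_cong subspace_orthogonal_complement) simp
  ultimately show ?thesis by simp
qed

lemma FixW_eq_orthogonal_complement: "FixW a J = {v. \<forall>c\<in>a ` J. v \<bullet> c = 0}"
proof (intro set_eqI iffI)
  fix v assume v: "v \<in> FixW a J"
  have "v \<bullet> a j = 0" if "j \<in> J" for j
  proof -
    have "sref a j \<in> parW a J" unfolding parW_def using that by (auto intro!: exI[of _ "[j]"])
    then have "sref a j v = v" using v by (simp add: FixW_def)
    then show ?thesis by (simp add: sref_eq_self_iff)
  qed
  then show "v \<in> {v. \<forall>c\<in>a ` J. v \<bullet> c = 0}" by blast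
next
  fix v assume v: "v \<in> {v. \<forall>c\<in>a ` J. v \<bullet> c = 0}"
  have "word_map a ws v = v" if "set ws \<subseteq> J" for ws
    using that v by (induction ws) (auto simp: sref_eq_self_iff)
  then show "v \<in> FixW a J" by (auto simp: FixW_def parW_def)
qed

lemma det_word_map: "det (matrix (word_map a ws)) = (-1) ^ length ws"
proof (induction ws)
  case Nil
  then show ?case using matrix_id by (simp add: id_def)
next
  case (Cons i ws)
  have "matrix (word_map a (i # ws)) = matrix (sref a i) ** matrix (word_map a ws)"
    by (simp add: matrix_compose linear_sref linear_word_map)
  then have "det (matrix (word_map a (i # ws))) = det (matrix (sref a i)) * det (matrix (word_map a ws))"
    by (simp only: det_mul)
  then show ?case using Cons by (simp add: det_sref del: word_map_Cons)
qed

lemma det_word_map_coxlen: "det (matrix (word_map a ws)) = (-1) ^ coxlen a (word_map a ws)"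
  by (metis coxlen_word_map_witness det_word_map)

lemma coxlen_snoc:
  "coxlen a (word_map a (ws @ [s])) = coxlen a (word_map a ws) + 1 \<or>
   coxlen a (word_map a (ws @ [s])) + 1 = coxlen a (word_map a ws)"
proof -
  define l where "l = coxlen a (word_map a ws)"
  define l' where "l' = coxlen a (word_map a (ws @ [s]))"
  have "(-1::real) ^ l' = - ((-1) ^ l)"
    using det_word_map_coxlen[of "ws @ [s]"] det_word_map_coxlen[of ws] det_word_map[of ws]
      det_word_map[of "ws @ [s]"] by (simp add: l_def l'_def)
  then have "l' \<noteq> l" by (metis neg_equal_zero power_eq_0_iff zero_neq_neg_one)
  moreover have "l' \<le> l + 1" using coxlen_append_le[of a ws "[s]"] by (simp add: l_def l'_def)
  moreover have "l \<le> l' + 1"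
    using coxlen_append_le[of a "ws @ [s]" "[s]"] by (simp add: word_map_append comp_assoc l_def l'_def)
  ultimately show ?thesis unfolding l_def l'_def by linarith
qed

lemma not_reduced_word_double: "\<not> reduced_word a (s # s # ws)"
  using coxlen_word_map_le[of a ws] by (simp add: reduced_word_def)

lemma reduced_word_in_pair_eq_alt_word:
  assumes "s \<noteq> t" "set ys \<subseteq> {s, t}" "reduced_word a (ys @ [s])"
  shows "ys = alt_word s t (length ys)"
  using assms(2,3)
proof (induction ys)
  case (Cons y ys)
  then have ys: "ys = alt_word s t (length ys)"
    using reduced_word_appendD[of a "[y]" "ys @ [s]"] by simp
  have y: "y \<in> {s, t}" using Cons.prems(1) by simp
  show ?case
  proof (cases "length ys")
    case 0
    then have "y \<noteq> s" using Cons.prems(2) not_reduced_word_double[of s "[]"] by auto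
    then show ?thesis using 0 y by simp
  next
    case (Suc k)
    then have "ys = (if even k then t else s) # alt_word s t k" using ys by simp
    then have "y \<noteq> (if even k then t else s)"
      using Cons.prems(2) not_reduced_word_double[of y "alt_word s t k @ [s]"] by auto
    then show ?thesis using ys Suc y assms(1) by auto
  qed
qed simp

lemma ascending_factorization:
  assumes "set us0 \<subseteq> X" "w = word_map a v0 \<circ> word_map a us0"
    "coxlen a (word_map a v0) + length us0 = coxlen a w"
  obtains v us where "set us \<subseteq> X" "w = word_map a v \<circ> word_map a us"
    "coxlen a (word_map a v) + length us = coxlen a w"
    "coxlen a (word_map a v) \<le> coxlen a (word_map a v0)"
    "\<And>x. x \<in> X \<Longrightarrow> coxlen a (word_map a v) < coxlen a (word_map a (v @ [x]))"
proof -
  define P where "P = (\<lambda>(v, us). set us \<subseteq> X \<and> w = word_map a v \<circ> word_map a us \<and>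
    coxlen a (word_map a v) + length us = coxlen a w)"
  have "P (v0, us0)" using assms by (simp add: P_def)
  then obtain vu where "P vu"
    and least: "\<And>vu'. P vu' \<Longrightarrow> coxlen a (word_map a (fst vu)) \<le> coxlen a (word_map a (fst vu'))"
    using ex_has_least_nat[of P "(v0, us0)" "\<lambda>vu. coxlen a (word_map a (fst vu))"] by blast
  obtain v us where vu: "vu = (v, us)" by (cases vu)
  have P: "P (v, us)" using \<open>P vu\<close> vu by simp
  have min: "coxlen a (word_map a v) \<le> coxlen a (word_map a v')" if "P (v', us')" for v' us'
    using least[OF that] vu by simp
  have v0: "coxlen a (word_map a v) \<le> coxlen a (word_map a v0)"
    using min \<open>P (v0, us0)\<close> .
  have asc: "coxlen a (word_map a v) < coxlen a (word_map a (v @ [x]))" if x: "x \<in> X" for x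
  proof (rule ccontr)
    assume "\<not> ?thesis"
    then have shorter: "coxlen a (word_map a (v @ [x])) + 1 = coxlen a (word_map a v)"
      using coxlen_snoc[of v x] by linarith
    have "word_map a (v @ [x]) \<circ> word_map a (x # us) = word_map a v \<circ> word_map a us"
      by (simp add: word_map_append comp_assoc)
    then have "P (v @ [x], x # us)" using P x shorter by (auto simp: P_def)
    then show False using min[of "v @ [x]" "x # us"] shorter by simp
  qed
  show ?thesis by (rule that[of us v]) (use P v0 asc in \<open>auto simp: P_def\<close>)
qed

end

definition dihedral_coeff :: "nat \<Rightarrow> nat \<Rightarrow> real" where
  "dihedral_coeff m k = sin (real k * (pi / real m)) / sin (pi / real m)"

lemma sin_Suc_Suc_mult:
  "sin (real (k + 2) * x) = 2 * cos x * sin (real (k + 1) * x) - sin (real k * x)"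
proof -
  define y where "y = real (k + 1) * x"
  have "real (k + 2) * x = y + x" "real k * x = y - x" "real (k + 1) * x = y"
    by (simp_all add: y_def algebra_simps)
  then show ?thesis by (simp add: sin_add sin_diff)
qed

lemma dihedral_coeff_Suc_Suc:
  "dihedral_coeff m (Suc (Suc k)) = 2 * cos (pi / real m) * dihedral_coeff m (Suc k) - dihedral_coeff m k"
  using sin_Suc_Suc_mult[of k "pi / real m"]
  by (simp add: dihedral_coeff_def diff_divide_distrib numeral_2_eq_2)

lemma sin_pi_divide_pos: "2 \<le> m \<Longrightarrow> 0 < sin (pi / real m)"
  by (rule sin_gt_zero) (auto simp: divide_less_eq)

lemma dihedral_coeff_0 [simp]: "dihedral_coeff m 0 = 0"
  by (simp add: dihedral_coeff_def)

lemma dihedral_coeff_1: "2 \<le> m \<Longrightarrow> dihedral_coeff m 1 = 1"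
  using sin_pi_divide_pos[of m] by (simp add: dihedral_coeff_def)

lemma dihedral_coeff_self: "2 \<le> m \<Longrightarrow> dihedral_coeff m m = 0"
  by (simp add: dihedral_coeff_def)

lemma dihedral_coeff_Suc_self: "2 \<le> m \<Longrightarrow> dihedral_coeff m (Suc m) = -1"
proof -
  assume m: "2 \<le> m"
  then have "real (Suc m) * (pi / real m) = pi / real m + pi" by (simp add: field_simps)
  then show ?thesis using sin_pi_divide_pos[OF m] by (simp add: dihedral_coeff_def sin_periodic_pi)
qed

lemma dihedral_coeff_nonneg: "2 \<le> m \<Longrightarrow> k \<le> m \<Longrightarrow> 0 \<le> dihedral_coeff m k"
proof -
  assume m: "2 \<le> m" and k: "k \<le> m"
  then have "real k * (pi / real m) \<le> pi" by (simp add: field_simps)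
  then have "0 \<le> sin (real k * (pi / real m))" by (intro sin_ge_zero) auto
  then show ?thesis using sin_pi_divide_pos[OF m] by (simp add: dihedral_coeff_def)
qed

definition root_cone :: "('n::finite \<Rightarrow> real^'n) \<Rightarrow> (real^'n) set" where
  "root_cone a = {(\<Sum>i\<in>UNIV. c i *\<^sub>R a i) | c. \<forall>i. 0 \<le> c i}"

lemma root_in_root_cone: "a i \<in> root_cone a"
proof -
  have "(\<Sum>j\<in>UNIV. (if j = i then 1 else 0) *\<^sub>R a j) = (\<Sum>j\<in>UNIV. if j = i then a j else 0)"
    by (rule sum.cong) auto
  then have "a i = (\<Sum>j\<in>UNIV. (if j = i then 1 else 0) *\<^sub>R a j)" by simp
  then show ?thesis by (auto simp: root_cone_def intro!: exI[of _ "\<lambda>j. if j = i then 1 else 0"])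
qed

lemma root_cone_nonneg_comb:
  assumes "x \<in> root_cone a" "y \<in> root_cone a" "0 \<le> p" "0 \<le> q"
  shows "p *\<^sub>R x + q *\<^sub>R y \<in> root_cone a"
proof -
  obtain c d where c: "\<forall>i. 0 \<le> c i" "x = (\<Sum>i\<in>UNIV. c i *\<^sub>R a i)"
    and d: "\<forall>i. 0 \<le> d i" "y = (\<Sum>i\<in>UNIV. d i *\<^sub>R a i)"
    using assms(1,2) by (auto simp: root_cone_def)
  have "p *\<^sub>R x + q *\<^sub>R y = (\<Sum>i\<in>UNIV. (p * c i + q * d i) *\<^sub>R a i)"
    by (simp add: c d scaleR_sum_right sum.distrib scaleR_add_left)
  moreover have "\<forall>i. 0 \<le> p * c i + q * d i" using c d assms(3,4) by simp
  ultimately show ?thesis by (auto simp: root_cone_def intro!: exI[of _ "\<lambda>i. p * c i + q * d i"])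
qed

locale geometric_coxeter = unit_roots +
  assumes inj_roots: "inj a"
    and independent_roots: "independent (range a)"
    and inner_roots: "i \<noteq> j \<Longrightarrow> a i \<bullet> a j = - cos (pi / real (m_ord a i j))"

lemma finite_coxeter_geom_imp_geometric_coxeter:
  assumes "finite_coxeter_geom a"
  shows "geometric_coxeter a"
  using assms unfolding finite_coxeter_geom_def by unfold_locales blast+

context geometric_coxeter
begin

lemma independent_roots_image: "independent (a ` J)"
  by (intro independent_mono[OF independent_roots] image_mono subset_UNIV)

lemma m_ord_ge_2:
  assumes st: "s \<noteq> t"
  shows "2 \<le> m_ord a s t"
proof (rule ccontr)
  assume "\<not> 2 \<le> m_ord a s t"
  then consider "m_ord a s t = 0" | "m_ord a s t = 1" by linarith
  then show False
  proof cases
    case 1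
    then have "(a s + a t) \<bullet> (a s + a t) = 0"
      using inner_roots[OF st] by (simp add: inner_add_left inner_add_right inner_commute)
    then have "a t = - a s" by (simp add: add_eq_0_iff2)
    moreover have "independent {a t, a s}" "a t \<noteq> a s"
      using independent_roots_image[of "{t, s}"] inj_roots st by (auto dest: injD)
    then have "a t \<notin> span {a s}" by (simp add: independent_insert)
    ultimately show False by (simp add: span_neg span_base)
  next
    case 2
    then have "(a s - a t) \<bullet> (a s - a t) = 0"
      using inner_roots[OF st] by (simp add: inner_diff_left inner_diff_right inner_commute)
    then show False using inj_roots st by (auto dest: injD)
  qed
qed

lemma sref_on_root_pair:
  assumes st: "s \<noteq> t"
  defines "c \<equiv> cos (pi / real (m_ord a s t))"
  shows "sref a s (x *\<^sub>R a s + y *\<^sub>R a t) = (2 * c * y - x) *\<^sub>R a s + y *\<^sub>R a t"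
    and "sref a t (x *\<^sub>R a s + y *\<^sub>R a t) = x *\<^sub>R a s + (2 * c * x - y) *\<^sub>R a t"
  using inner_roots[OF st]
  by (simp_all add: c_def sref_def inner_add_left inner_commute algebra_simps vec_eq_iff)

lemma word_map_alt_word_root:
  assumes st: "s \<noteq> t"
  defines "f \<equiv> dihedral_coeff (m_ord a s t)"
  shows "word_map a (alt_word s t k) (a s) =
    (if even k then f (k + 1) *\<^sub>R a s + f k *\<^sub>R a t else f k *\<^sub>R a s + f (k + 1) *\<^sub>R a t)"
proof (induction k)
  case 0
  then show ?case using dihedral_coeff_1[OF m_ord_ge_2[OF st]] by (simp add: f_def)
next
  case (Suc k)
  then show ?case
    using sref_on_root_pair[OF st] dihedral_coeff_Suc_Suc[of "m_ord a s t" k]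
    by (cases "even k") (simp_all add: f_def)
qed

lemma not_reduced_alt_word_m_ord:
  assumes st: "s \<noteq> t"
  shows "\<not> reduced_word a (alt_word s t (m_ord a s t) @ [s])"
proof
  assume reduced: "reduced_word a (alt_word s t (m_ord a s t) @ [s])"
  define m where "m = m_ord a s t"
  have m2: "2 \<le> m" using m_ord_ge_2[OF st] by (simp add: m_def)
  then obtain k where m: "m = Suc k" by (cases m) auto
  define x where "x = (if even k then t else s)"
  define u where "u = word_map a (alt_word s t m)"
  have "u (a s) = - a x"
  proof (cases "even k")
    case True
    then have "odd m" "x = t" using m by (simp_all add: x_def)
    then show ?thesis
      using word_map_alt_word_root[OF st, of m] dihedral_coeff_self[OF m2] dihedral_coeff_Suc_self[OF m2]
      by (simp add: u_def flip: m_def)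
  next
    case False
    then have "even m" "x = s" using m by (simp_all add: x_def)
    then show ?thesis
      using word_map_alt_word_root[OF st, of m] dihedral_coeff_self[OF m2] dihedral_coeff_Suc_self[OF m2]
      by (simp add: u_def flip: m_def)
  qed
  \<comment> \<open>so u s = x u, and x cancels the first letter of u\<close>
  have "word_map a (alt_word s t m @ [s]) = u \<circ> sref a s"
    by (simp add: word_map_append u_def)
  also have "\<dots> = reflection_along (u (a s)) \<circ> u"
    unfolding u_def by (rule orthogonal_transformation_comp_sref[OF orthogonal_transformation_word_map])
  also have "\<dots> = sref a x \<circ> u"
    using \<open>u (a s) = - a x\<close> by (simp add: sref_eq_reflection_along)
  also have "\<dots> = word_map a (alt_word s t k)"
    by (simp add: u_def m x_def)
  finally show False
    using reduced coxlen_word_map_le[of a "alt_word s t k"] by (simp add: reduced_word_def m_def[symmetric] m)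
qed

lemma reduced_pair_word_root_nonneg:
  assumes st: "s \<noteq> t" and ys: "set ys \<subseteq> {s, t}" and reduced: "reduced_word a (ys @ [s])"
  obtains c d where "0 \<le> c" "0 \<le> d" "word_map a ys (a s) = c *\<^sub>R a s + d *\<^sub>R a t"
proof -
  define k where "k = length ys"
  define m where "m = m_ord a s t"
  have m2: "2 \<le> m" using m_ord_ge_2[OF st] m_def by simp
  have ys_alt: "ys = alt_word s t k"
    using reduced_word_in_pair_eq_alt_word[OF st ys reduced] by (simp add: k_def)
  have "k + 1 \<le> m"
  proof (rule ccontr)
    assume "\<not> k + 1 \<le> m"
    then have "m \<le> k" by simp
    then obtain pre where "alt_word s t k = pre @ alt_word s t m"
      by (rule alt_word_suffix)
    then have "reduced_word a (alt_word s t m @ [s])"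
      using reduced ys_alt reduced_word_appendD[of a pre] by simp
    then show False using not_reduced_alt_word_m_ord[OF st] by (simp add: m_def)
  qed
  then have nonneg: "0 \<le> dihedral_coeff m k" "0 \<le> dihedral_coeff m (k + 1)"
    using dihedral_coeff_nonneg[OF m2] by auto
  have "word_map a ys (a s) = dihedral_coeff m (k + 1) *\<^sub>R a s + dihedral_coeff m k *\<^sub>R a t \<or>
        word_map a ys (a s) = dihedral_coeff m k *\<^sub>R a s + dihedral_coeff m (k + 1) *\<^sub>R a t"
    using word_map_alt_word_root[OF st, of k] unfolding ys_alt m_def by presburger
  then show ?thesis using that[OF nonneg(2,1)] that[OF nonneg] by blast
qed

text \<open>Write w = v u with u a word in s and t and v as short as possible: then v ascends at both s
  and t, so v(\<alpha>_s), v(\<alpha>_t) are positive by induction, and u(\<alpha>_s) is a nonnegative combination of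
  \<alpha>_s and \<alpha>_t by the dihedral computation.\<close>
lemma word_map_root_in_root_cone:
  assumes "coxlen a (word_map a ws) < coxlen a (word_map a (ws @ [s]))"
  shows "word_map a ws (a s) \<in> root_cone a"
  using assms
proof (induction "coxlen a (word_map a ws)" arbitrary: ws s rule: less_induct)
  case less
  define w where "w = word_map a ws"
  show ?case
  proof (cases "coxlen a w = 0")
    case True
    then have "word_map a ws = id" unfolding w_def by (rule coxlen_eq_0_imp_id)
    then show ?thesis using root_in_root_cone by simp
  next
    case False
    then obtain v0 t where v0: "w = word_map a (v0 @ [t])" "coxlen a (word_map a v0) + 1 = coxlen a w"
      unfolding w_def by (rule coxlen_last_letter)
    have "t \<noteq> s"
    proof
      assume "t = s"
      then have "word_map a (ws @ [s]) = word_map a v0"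
        using v0(1) by (simp add: w_def word_map_append comp_assoc)
      then show False using less.prems v0(2) by (simp add: w_def)
    qed
    obtain v us where us: "set us \<subseteq> {s, t}" and w: "w = word_map a v \<circ> word_map a us"
      and len: "coxlen a (word_map a v) + length us = coxlen a w"
      and shorter: "coxlen a (word_map a v) \<le> coxlen a (word_map a v0)"
      and ascent: "\<And>x. x \<in> {s, t} \<Longrightarrow> coxlen a (word_map a v) < coxlen a (word_map a (v @ [x]))"
      by (rule ascending_factorization[of "[t]" "{s, t}" w v0]) (use v0 in \<open>simp_all add: word_map_append\<close>)
    have root_s: "word_map a v (a s) \<in> root_cone a" and root_t: "word_map a v (a t) \<in> root_cone a"
      using less.hyps ascent shorter v0(2) by (auto simp: w_def)
    have "word_map a (ws @ [s]) = word_map a v \<circ> word_map a (us @ [s])"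
      using w by (simp add: w_def word_map_append comp_assoc)
    then have "reduced_word a (us @ [s])"
      using less.prems len by (intro reduced_word_if_coxlen_additive) (auto simp: w_def)
    then obtain c d where cd: "0 \<le> c" "0 \<le> d" "word_map a us (a s) = c *\<^sub>R a s + d *\<^sub>R a t"
      using reduced_pair_word_root_nonneg \<open>t \<noteq> s\<close> us by metis
    have "word_map a ws (a s) = c *\<^sub>R word_map a v (a s) + d *\<^sub>R word_map a v (a t)"
      using w cd(3) linear_word_map[of v] by (simp add: w_def linear_add linear_scale)
    then show ?thesis using root_cone_nonneg_comb[OF root_s root_t cd(1,2)] by simp
  qed
qed

lemma neg_root_not_in_root_cone: "- a j \<notin> root_cone a"
proof
  assume "- a j \<in> root_cone a"
  then obtain c where c: "\<forall>i. 0 \<le> c i" "- a j = (\<Sum>i\<in>UNIV. c i *\<^sub>R a i)"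
    by (auto simp: root_cone_def)
  define d where "d i = c i + (if i = j then 1 else 0)" for i
  have "(\<Sum>i\<in>UNIV. d i *\<^sub>R a i) = (\<Sum>i\<in>UNIV. c i *\<^sub>R a i) + (\<Sum>i\<in>UNIV. if i = j then a i else 0)"
    unfolding sum.distrib[symmetric] by (rule sum.cong) (auto simp: d_def scaleR_add_left)
  also have "\<dots> = 0" using c(2)[symmetric] by simp
  finally have "(\<Sum>v\<in>range a. d (inv a v) *\<^sub>R v) = 0"
    using inj_roots by (simp add: sum.reindex)
  then have "d (inv a (a j)) = 0"
    using independentD[OF independent_roots, of "range a" "\<lambda>v. d (inv a v)" "a j"] by simp
  moreover have "1 \<le> d (inv a (a j))" using c(1) inj_roots by (simp add: d_def)
  ultimately show False by simp
qed

lemma reflection_along_eq_sref_imp_root: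
  assumes b: "norm b = 1" and eq: "reflection_along b = sref a j" and cone: "b \<in> root_cone a"
  shows "b = a j"
proof -
  have bb: "b \<bullet> b = 1" using b by (simp add: norm_eq_1)
  then have "reflection_along b b = - b" by (simp add: reflection_along_def scaleR_2 algebra_simps)
  then have "b - (2 * (b \<bullet> a j)) *\<^sub>R a j = - b" using eq by (simp add: sref_def)
  then have "b = (b \<bullet> a j) *\<^sub>R a j" by (simp add: algebra_simps vec_eq_iff)
  moreover have "(b \<bullet> a j) * (b \<bullet> a j) = 1"
    using bb calculation by (metis inner_root_self inner_scaleR_left inner_scaleR_right mult.right_neutral)
  then have "b \<bullet> a j = 1 \<or> b \<bullet> a j = -1" by (simp add: square_eq_1_iff)
  ultimately show ?thesis using cone neg_root_not_in_root_cone by auto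
qed

end

definition conj_index :: "('n::finite \<Rightarrow> real^'n) \<Rightarrow> 'n set \<Rightarrow> (real^'n \<Rightarrow> real^'n) \<Rightarrow> 'n \<Rightarrow> 'n" where
  "conj_index a J n i = (THE j. j \<in> J \<and> inv n \<circ> sref a i \<circ> n = sref a j)"

lemma sigma_J_eq_sign_on_conj_index: "sigma_J a J n = sign_on J (conj_index a J n)"
  by (simp add: sigma_J_def conj_index_def)

context geometric_coxeter
begin

lemma X_J_inv_root_in_root_cone:
  assumes n: "n \<in> X_J a J" and s: "s \<in> J"
  shows "inv n (a s) \<in> root_cone a"
proof -
  obtain ws where ws: "n = word_map a ws" using n by (auto simp: X_J_def coxW_def)
  have "coxlen a (sref a s \<circ> n) > coxlen a n" using n s by (simp add: X_J_def)
  then have "coxlen a (word_map a (rev ws)) < coxlen a (word_map a (rev ws @ [s]))"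
    using coxlen_rev[of ws] coxlen_rev[of "s # ws"] by (simp add: ws)
  then show ?thesis
    using word_map_root_in_root_cone by (simp add: ws inv_word_map)
qed

lemma conj_sref_word_map:
  fixes ws
  defines "w \<equiv> word_map a ws"
  shows "inv w \<circ> sref a s \<circ> w = reflection_along (inv w (a s))"
proof -
  have "inv w \<circ> sref a s = reflection_along (inv w (a s)) \<circ> inv w"
    unfolding w_def inv_word_map by (rule orthogonal_transformation_comp_sref[OF orthogonal_transformation_word_map])
  moreover have "inv w \<circ> w = id" unfolding w_def inv_word_map by (rule word_map_rev_comp)
  ultimately show ?thesis by (simp add: comp_assoc)
qed

lemma N_J_inv_root:
  assumes n: "n \<in> N_J a J" and s: "s \<in> J" and j: "inv n \<circ> sref a s \<circ> n = sref a j"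
  shows "inv n (a s) = a j"
proof (rule reflection_along_eq_sref_imp_root)
  obtain ws where ws: "n = word_map a ws" using n by (auto simp: N_J_def X_J_def coxW_def)
  show "norm (inv n (a s)) = 1"
    using orthogonal_transformation_norm[OF orthogonal_transformation_word_map] norm_root
    by (simp add: ws inv_word_map)
  show "reflection_along (inv n (a s)) = sref a j" using j conj_sref_word_map by (simp add: ws)
  show "inv n (a s) \<in> root_cone a"
    using n s by (intro X_J_inv_root_in_root_cone) (simp_all add: N_J_def)
qed

lemma N_J_conj_index:
  assumes n: "n \<in> N_J a J" and s: "s \<in> J"
  shows "conj_index a J n s \<in> J" "n (a (conj_index a J n s)) = a s"
proof -
  have "inv n \<circ> sref a s \<circ> n \<in> sref a ` J"
    using n s unfolding N_J_def by blast
  then obtain j where j: "j \<in> J" "inv n \<circ> sref a s \<circ> n = sref a j" by blast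
  have "\<exists>!j. j \<in> J \<and> inv n \<circ> sref a s \<circ> n = sref a j"
  proof (rule ex1I[of _ j])
    fix j' assume "j' \<in> J \<and> inv n \<circ> sref a s \<circ> n = sref a j'"
    then have "a j' = a j" using N_J_inv_root[OF n s] j by metis
    then show "j' = j" using inj_roots by (simp add: inj_eq)
  qed (use j in simp)
  then have "conj_index a J n s \<in> J \<and> inv n \<circ> sref a s \<circ> n = sref a (conj_index a J n s)"
    unfolding conj_index_def by (rule theI')
  moreover have "n (inv n x) = x" for x
  proof -
    obtain ws where "n = word_map a ws" using n by (auto simp: N_J_def X_J_def coxW_def)
    then have "n \<circ> inv n = id" using word_map_comp_rev by (simp add: inv_word_map)
    then show ?thesis by (metis comp_apply id_apply)
  qed
  ultimately show "conj_index a J n s \<in> J" "n (a (conj_index a J n s)) = a s"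
    using N_J_inv_root[OF n s] by metis+
qed

lemma bij_betw_conj_index:
  assumes n: "n \<in> N_J a J"
  shows "bij_betw (conj_index a J n) J J"
proof -
  have "inj_on (conj_index a J n) J"
    by (rule inj_onI) (metis N_J_conj_index(2)[OF n] inj_roots injD)
  moreover have "conj_index a J n ` J \<subseteq> J" using N_J_conj_index(1)[OF n] by blast
  ultimately show ?thesis by (simp add: bij_betw_def endo_inj_surj)
qed

lemma eps_eq_sigma_J_mult_alpha_J:
  assumes n: "n \<in> N_J a J"
  shows "eps n = real_of_int (sigma_J a J n) * alpha_J a J n"
proof -
  let ?\<pi> = "conj_index a J n"
  define q where "q = map_permutation J a (restrict_id ?\<pi> J)"
  have r: "restrict_id ?\<pi> J permutes J"
    by (rule permutes_restrict_id[OF bij_betw_conj_index[OF n]])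
  have inj_J: "inj_on a J" using inj_roots by (rule inj_on_subset) simp
  have q: "q permutes a ` J"
    unfolding q_def using inj_J r by (intro map_permutation_permutes) (auto simp: inj_on_imp_bij_betw)
  have "sign q = sigma_J a J n"
    using sign_map_permutation[OF inj_J r] by (simp add: q_def sigma_J_eq_sign_on_conj_index sign_on_def)
  have n_q: "n (q c) = 1 *\<^sub>R c" if "c \<in> a ` J" for c
    using that N_J_conj_index[OF n] map_permutation_apply[OF inj_J] by (auto simp: q_def)
  obtain ws where ws: "n = word_map a ws" using n by (auto simp: N_J_def X_J_def coxW_def)
  have orth: "orthogonal_transformation n" using orthogonal_transformation_word_map by (simp add: ws)
  have n_Fix: "n x \<bullet> c = 0" if x: "\<forall>c\<in>a ` J. x \<bullet> c = 0" and c: "c \<in> a ` J" for x c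
  proof -
    obtain s where s: "s \<in> J" "c = a s" using c by blast
    then have "n x \<bullet> c = n x \<bullet> n (a (?\<pi> s))" using N_J_conj_index[OF n] by simp
    also have "\<dots> = x \<bullet> a (?\<pi> s)" using orth by (simp add: orthogonal_transformation_def)
    also have "\<dots> = 0" using x N_J_conj_index(1)[OF n s(1)] by simp
    finally show ?thesis .
  qed
  have "det (matrix n) = of_int (sign q) * (\<Prod>c\<in>a ` J. 1) * det_on {v. \<forall>c\<in>a ` J. v \<bullet> c = 0} n"
    using orth n_Fix q n_q independent_roots_image
    by (intro det_matrix_eq_sign_det_on_orthogonal_complement[where \<mu> = "\<lambda>_. 1"])
       (auto simp: orthogonal_transformation_def)
  then show ?thesis
    using \<open>sign q = sigma_J a J n\<close> by (simp add: eps_def alpha_J_def FixW_eq_orthogonal_complement)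
qed

end

theorem lemma2p1:
  fixes a :: "'n::finite \<Rightarrow> real^'n" and J :: "'n set" and n :: "real^'n \<Rightarrow> real^'n"
  assumes "finite_coxeter_geom a"
    and "n \<in> N_J a J"
  shows "real_of_int (sigma_J a J n) = eps n * alpha_J a J n"
proof -
  interpret geometric_coxeter a
    using assms(1) by (rule finite_coxeter_geom_imp_geometric_coxeter)
  obtain ws where "n = word_map a ws" using assms(2) by (auto simp: N_J_def X_J_def coxW_def)
  then have "eps n * eps n = 1"
    using det_word_map[of ws] by (simp add: eps_def flip: power_add)
  moreover have "real_of_int (sigma_J a J n) * real_of_int (sigma_J a J n) = 1"
    by (simp add: sigma_J_def sign_on_def flip: of_int_mult)
  ultimately show ?thesis
    using eps_eq_sigma_J_mult_alpha_J[OF assms(2)] by (metis mult.assoc mult.commute mult.right_neutral)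
qed

end
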